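(* Let $M$ be an $\aleph_1$-strongly collectionwise Hausdorff manifold. If $w\mathsf{S}(M,\mathbb{R})$ holds, then $M$ is $\omega_1$-compact.
   Context: All spaces are Hausdorff and all maps continuous. A manifold is a connected Hausdorff space locally homeomorphic to $\mathbb{R}^n$. A space is $\aleph_1$-strongly collectionwise Hausdorff if every closed discrete subset $\{x_\alpha:\alpha<\lambda\}$ with $\lambda\le\aleph_1$ can be expanded to a discrete collection of open sets $\{U_\alpha:\alpha<\lambda\}$ with $x_\alpha\in U_\alpha$ (discrete: each point has a neighbourhood meeting at most one member). A space is $\omega_1$-compact if every closed discrete subspace is countable. For a non-Lindelöf space $X$ and a space $Y$, $w\mathsf{S}(X,Y)$ means: for every continuous $f:X\to Y$ there are a Lindelöf $Z\subset X$ and a continuous $r:X\to Z$ with $(f\circ r)\restriction(X\setminus Z)=f\restriction(X\setminus Z)$. (For Lindelöf $X$ the property is regarded as trivially true.) *)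

theory Defs
  imports "HOL-Analysis.Analysis"
begin

definition is_manifold :: "'a topology \<Rightarrow> bool" where
  "is_manifold X \<longleftrightarrow> connected_space X \<and> Hausdorff_space X \<and>
     (\<exists>n. \<forall>x \<in> topspace X. \<exists>U. openin X U \<and> x \<in> U \<and>
            subtopology X U homeomorphic_space Euclidean_space n)"

definition closed_discrete_in :: "'a topology \<Rightarrow> 'a set \<Rightarrow> bool" where
  "closed_discrete_in X D \<longleftrightarrow> closedin X D \<and>
     (\<forall>x \<in> D. \<exists>U. openin X U \<and> U \<inter> D = {x})"

text \<open>aleph_1-strongly collectionwise Hausdorff: every closed discrete set of
  cardinality at most aleph_1 (= cardSuc natLeq) expands to a discrete family of open sets.\<close>
definition aleph1_strongly_cwH :: "'a topology \<Rightarrow> bool" where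
  "aleph1_strongly_cwH X \<longleftrightarrow>
     (\<forall>D. closed_discrete_in X D \<and> (card_of D, cardSuc natLeq) \<in> ordLeq \<longrightarrow>
        (\<exists>U. (\<forall>x \<in> D. openin X (U x) \<and> x \<in> U x) \<and>
             (\<forall>p \<in> topspace X. \<exists>V. openin X V \<and> p \<in> V \<and>
                (\<forall>x \<in> D. \<forall>y \<in> D. V \<inter> U x \<noteq> {} \<and> V \<inter> U y \<noteq> {} \<longrightarrow> x = y))))"

definition omega1_compact :: "'a topology \<Rightarrow> bool" where
  "omega1_compact X \<longleftrightarrow> (\<forall>D. closed_discrete_in X D \<longrightarrow> countable D)"

definition wS :: "'a topology \<Rightarrow> 'b topology \<Rightarrow> bool" where
  "wS X Y \<longleftrightarrow> Lindelof_space X \<or>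
     (\<forall>f. continuous_map X Y f \<longrightarrow>
        (\<exists>Z r. Z \<subseteq> topspace X \<and> Lindelof_space (subtopology X Z) \<and>
               continuous_map X (subtopology X Z) r \<and>
               (\<forall>x \<in> topspace X - Z. f (r x) = f x)))"

end

theory Submission
  imports Defs "HOL-Library.Countable_Set_Type"
begin

text \<open>
  Suppose \<open>M\<close> has an uncountable closed discrete set. Shrink it to a set \<open>D\<close> of size
  \<open>\<aleph>\<^sub>1\<close>, expand \<open>D\<close> to a discrete family of open sets \<open>U\<^sub>d\<close> and label the points
  injectively by reals \<open>m\<^sub>d \<in> (0,1)\<close>. In a chart at \<open>d\<close> choose a bump \<open>\<rho>\<^sub>d\<close>, below 1
  only inside \<open>U\<^sub>d\<close>, and a path \<open>p\<^sub>d\<close> along which \<open>\<rho>\<^sub>d\<close> increases linearly from 0 to 1.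
  Gluing the zigzags \<open>zigzag m\<^sub>d \<circ> \<rho>\<^sub>d\<close> gives a continuous \<open>f : M \<rightarrow> \<real>\<close>, whose turning
  values \<open>m\<^sub>d\<close> and \<open>m\<^sub>d + 1\<close> record the labels. Property \<open>wS(M,\<real>)\<close> yields a Lindelof
  set \<open>Z\<close> and \<open>r : M \<rightarrow> Z\<close> with \<open>f \<circ> r = f\<close> off \<open>Z\<close>. Only countably many \<open>U\<^sub>d\<close> meet \<open>Z\<close>,
  so some \<open>U\<^sub>\<alpha>\<close> misses it. The path \<open>r \<circ> p\<^sub>\<alpha>\<close> has \<open>f \<noteq> 0\<close>, so by connectedness it stays
  in one bump region \<open>U\<^sub>\<beta>\<close>, where \<open>f\<close> shows the zigzag of \<open>m\<^sub>\<alpha>\<close> as a continuous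
  reparametrisation of the zigzag of \<open>m\<^sub>\<beta>\<close>. Such a reparametrisation cannot produce a rising
  segment of one zigzag while the other descends, so \<open>m\<^sub>\<alpha> = m\<^sub>\<beta>\<close>; then \<open>\<alpha> = \<beta>\<close>, although
  \<open>r (p\<^sub>\<alpha> 0)\<close> lies in \<open>Z\<close> and in \<open>U\<^sub>\<beta>\<close>.
\<close>

lemma continuous_map_locally:
  assumes "\<And>x. x \<in> topspace X \<Longrightarrow> \<exists>T. openin X T \<and> x \<in> T \<and> continuous_map (subtopology X T) Y f"
  shows "continuous_map X Y f"
proof -
  have "\<forall>x \<in> topspace X. \<exists>T. openin X T \<and> x \<in> T \<and> continuous_map (subtopology X T) Y f"
    using assms by blast
  then obtain T where T: "\<forall>x \<in> topspace X. openin X (T x) \<and> x \<in> T x \<and> continuous_map (subtopology X (T x)) Y f"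
    by (rule bchoice[THEN exE])
  show ?thesis
  proof (rule pasting_lemma[where f="\<lambda>_. f" and T=T and I="topspace X"])
    show "\<exists>j. j \<in> topspace X \<and> x \<in> T j \<and> f x = f x" if "x \<in> topspace X" for x
      using T that by blast
  qed (use T in auto)
qed

lemma connectedin_subset_disjoint_open_family:
  assumes "connectedin X C" "C \<subseteq> (\<Union>i \<in> I. W i)" "\<And>i. i \<in> I \<Longrightarrow> openin X (W i)"
    and "\<And>i j. \<lbrakk>i \<in> I; j \<in> I; i \<noteq> j\<rbrakk> \<Longrightarrow> disjnt (W i) (W j)"
    and "j \<in> I" "x \<in> C" "x \<in> W j"
  shows "C \<subseteq> W j"
proof -
  have "separatedin X (W j) (\<Union>i \<in> I - {j}. W i)"
  proof (subst separatedin_open_sets)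
    show "disjnt (W j) (\<Union>i \<in> I - {j}. W i)"
      using assms(4,5) unfolding disjnt_def by blast
  qed (use assms(3,5) in auto)
  moreover have "C \<subseteq> W j \<union> (\<Union>i \<in> I - {j}. W i)"
    using assms(2) by blast
  ultimately have "C \<subseteq> W j \<or> C \<subseteq> (\<Union>i \<in> I - {j}. W i)"
    using assms(1) connectedin_subset_separated_union by blast
  moreover have "\<not> C \<subseteq> (\<Union>i \<in> I - {j}. W i)"
    using assms(4-7) unfolding disjnt_def by blast
  ultimately show ?thesis
    by blast
qed

section \<open>Closed discrete sets and discrete families\<close>

lemma subtopology_closed_discrete_in:
  assumes "closed_discrete_in X D"
  shows "subtopology X D = discrete_topology D"
proof -
  have "D \<subseteq> topspace X"
    using assms closedin_subset by (auto simp: closed_discrete_in_def)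
  moreover have "openin (subtopology X D) {x}" if "x \<in> D" for x
    using assms that by (auto simp: closed_discrete_in_def openin_subtopology) (metis Int_commute)
  ultimately show ?thesis
    by (metis discrete_topology_unique topspace_subtopology_subset)
qed

lemma closed_discrete_in_subset:
  assumes D: "closed_discrete_in X D" and "D' \<subseteq> D"
  shows "closed_discrete_in X D'"
  unfolding closed_discrete_in_def
proof (intro conjI ballI)
  have "closedin (subtopology X D) D'"
    using \<open>D' \<subseteq> D\<close> by (simp add: subtopology_closed_discrete_in[OF D])
  moreover have "closedin X D"
    using D by (simp add: closed_discrete_in_def)
  ultimately show "closedin X D'"
    by (rule closedin_trans_full)
  fix x assume "x \<in> D'"
  then have "x \<in> D"
    using \<open>D' \<subseteq> D\<close> by blast
  then obtain U where "openin X U" "U \<inter> D = {x}"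
    using D by (auto simp: closed_discrete_in_def)
  then show "\<exists>U. openin X U \<and> U \<inter> D' = {x}"
    using \<open>x \<in> D'\<close> \<open>D' \<subseteq> D\<close> by blast
qed

lemma countable_closed_discrete_in_Lindelof:
  assumes "Lindelof_space X" "closed_discrete_in X D"
  shows "countable D"
proof -
  have "Lindelof_space (discrete_topology D)"
    using assms Lindelof_space_closedin_subtopology[of X D]
    by (simp add: closed_discrete_in_def subtopology_closed_discrete_in)
  then obtain \<V> where "countable \<V>" "\<V> \<subseteq> (\<lambda>x. {x}) ` D" "\<Union>\<V> = D"
    using Lindelof_spaceD[of "discrete_topology D" "(\<lambda>x. {x}) ` D"] by auto
  then have "\<V> = (\<lambda>x. {x}) ` D"
    by blast
  then show ?thesis
    using \<open>countable \<V>\<close> countable_image_inj_on[of "\<lambda>x. {x}" D] by (simp add: inj_on_def)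
qed

definition discrete_family_in :: "'a topology \<Rightarrow> 'i set \<Rightarrow> ('i \<Rightarrow> 'a set) \<Rightarrow> bool" where
  "discrete_family_in X I U \<longleftrightarrow>
     (\<forall>x \<in> topspace X. \<exists>V. openin X V \<and> x \<in> V \<and>
        (\<forall>i \<in> I. \<forall>j \<in> I. V \<inter> U i \<noteq> {} \<and> V \<inter> U j \<noteq> {} \<longrightarrow> i = j))"

lemma discrete_family_inE:
  assumes "discrete_family_in X I U" "x \<in> topspace X"
  obtains V where "openin X V" "x \<in> V"
    "\<forall>i \<in> I. \<forall>j \<in> I. V \<inter> U i \<noteq> {} \<and> V \<inter> U j \<noteq> {} \<longrightarrow> i = j"
  using assms unfolding discrete_family_in_def by metis

lemma discrete_family_in_disjoint:
  assumes "discrete_family_in X I U" "i \<in> I" "j \<in> I" "y \<in> topspace X" "y \<in> U i" "y \<in> U j"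
  shows "i = j"
proof -
  obtain V where "y \<in> V" "\<forall>i \<in> I. \<forall>j \<in> I. V \<inter> U i \<noteq> {} \<and> V \<inter> U j \<noteq> {} \<longrightarrow> i = j"
    using discrete_family_inE[OF assms(1,4)] by metis
  moreover have "V \<inter> U i \<noteq> {}" "V \<inter> U j \<noteq> {}"
    using \<open>y \<in> V\<close> assms(5,6) by auto
  ultimately show ?thesis
    using assms(2,3) by simp
qed

lemma countable_discrete_family_meeting_Lindelof:
  assumes U: "discrete_family_in X I U"
    and Z: "Z \<subseteq> topspace X" "Lindelof_space (subtopology X Z)"
  shows "countable {i \<in> I. U i \<inter> Z \<noteq> {}}"
proof -
  define \<W> where
    "\<W> = {V. openin X V \<and> (\<forall>i \<in> I. \<forall>j \<in> I. V \<inter> U i \<noteq> {} \<and> V \<inter> U j \<noteq> {} \<longrightarrow> i = j)}"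
  have "Z \<subseteq> \<Union>\<W>"
  proof
    fix z assume "z \<in> Z"
    then have "z \<in> topspace X"
      using Z(1) by blast
    then obtain V where V: "openin X V" "z \<in> V"
      "\<forall>i \<in> I. \<forall>j \<in> I. V \<inter> U i \<noteq> {} \<and> V \<inter> U j \<noteq> {} \<longrightarrow> i = j"
      by (rule discrete_family_inE[OF U])
    then have "V \<in> \<W>"
      unfolding \<W>_def by simp
    then show "z \<in> \<Union>\<W>"
      using V(2) by blast
  qed
  moreover have "\<forall>V \<in> \<W>. openin X V"
    by (simp add: \<W>_def)
  ultimately obtain \<V> where \<V>: "countable \<V>" "\<V> \<subseteq> \<W>" "Z \<subseteq> \<Union>\<V>"
    using Z(2)[unfolded Lindelof_space_subtopology_subset[OF Z(1)], THEN spec[of _ \<W>]] by auto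
  have "{i \<in> I. U i \<inter> Z \<noteq> {}} \<subseteq> (\<Union>V \<in> \<V>. {i \<in> I. V \<inter> U i \<noteq> {}})"
    using \<V>(3) by blast
  moreover have "countable {i \<in> I. V \<inter> U i \<noteq> {}}" if "V \<in> \<V>" for V
  proof (rule countable_subset)
    let ?S = "{i \<in> I. V \<inter> U i \<noteq> {}}"
    have "\<forall>i \<in> ?S. \<forall>j \<in> ?S. i = j"
      using that \<V>(2) by (auto simp: \<W>_def)
    then show "?S \<subseteq> {SOME i. i \<in> ?S}"
      by (metis (no_types, lifting) singletonI someI subsetI)
  qed simp
  ultimately show ?thesis
    using \<V>(1) by (meson countable_UN countable_subset)
qed

lemma aleph1_strongly_cwH_expansion:
  assumes "aleph1_strongly_cwH X" "closed_discrete_in X D" "(card_of D, cardSuc natLeq) \<in> ordLeq"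
  obtains U where "\<forall>x \<in> D. openin X (U x) \<and> x \<in> U x" "discrete_family_in X D U"
  using assms(1)[unfolded aleph1_strongly_cwH_def discrete_family_in_def[symmetric],
      rule_format, OF conjI[OF assms(2,3)]] that
  by blast

section \<open>Subsets of size \<open>\<aleph>\<^sub>1\<close>\<close>

context
  includes cardinal_syntax
begin

lemma uncountable_imp_cardSuc_natLeq_le:
  assumes "\<not> countable A"
  shows "cardSuc natLeq \<le>o |A|"
proof -
  have "\<not> |A| \<le>o natLeq"
    using assms countable_card_le_natLeq by auto
  then have "natLeq <o |A|"
    by (simp add: not_ordLeq_iff_ordLess[OF natLeq_Well_order card_of_Well_order])
  then show ?thesis
    by (rule cardSuc_least[OF natLeq_Card_order card_of_Card_order])
qed

lemma uncountable_subset_card_le_cardSuc_natLeq: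
  assumes "\<not> countable D"
  obtains D' where "D' \<subseteq> D" "\<not> countable D'" "|D'| \<le>o cardSuc natLeq"
proof -
  let ?F = "Field (cardSuc natLeq)"
  have F: "|?F| =o cardSuc natLeq"
    by (rule card_of_Field_ordIso[OF cardSuc_Card_order[OF natLeq_Card_order]])
  have "|?F| \<le>o |D|"
    by (rule ordIso_ordLeq_trans[OF F uncountable_imp_cardSuc_natLeq_le[OF assms]])
  then obtain f where f: "inj_on f ?F" "f ` ?F \<subseteq> D"
    by (auto simp flip: card_of_ordLeq)
  then have "|?F| =o |f ` ?F|"
    by (auto simp flip: card_of_ordIso intro: bij_betw_imageI)
  then have D': "|f ` ?F| =o cardSuc natLeq"
    by (rule ordIso_transitive[OF ordIso_symmetric F])
  show thesis
  proof (rule that[of "f ` ?F"])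
    show "f ` ?F \<subseteq> D"
      by (rule f(2))
    show "|f ` ?F| \<le>o cardSuc natLeq"
      using D' by (simp add: ordIso_iff_ordLeq)
    show "\<not> countable (f ` ?F)"
    proof
      assume "countable (f ` ?F)"
      then have "|f ` ?F| \<le>o natLeq"
        using countable_card_le_natLeq by auto
      then have "cardSuc natLeq \<le>o natLeq"
        by (rule ordIso_ordLeq_trans[OF ordIso_symmetric[OF D']])
      then show False
        using cardSuc_greater[OF natLeq_Card_order] not_ordLess_ordLeq by blast
    qed
  qed
qed

lemma uncountable_imp_two_points:
  assumes "\<not> countable A"
  shows "\<exists>a \<in> A. \<exists>b \<in> A. a \<noteq> b"
proof -
  obtain a where "a \<in> A"
    using assms by (metis countable_empty equals0I)
  moreover have "A \<noteq> {a}"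
    using assms by auto
  ultimately show ?thesis
    by blast
qed

lemma card_le_cardSuc_natLeq_embeds_unit_interval:
  assumes "|A| \<le>o cardSuc natLeq"
  obtains m :: "'a \<Rightarrow> real" where "inj_on m A" "m ` A \<subseteq> {0<..<1}"
proof -
  have "cardSuc natLeq \<le>o |{0<..<1::real}|"
    by (rule uncountable_imp_cardSuc_natLeq_le) (simp add: uncountable_open_interval)
  then have "|A| \<le>o |{0<..<1::real}|"
    by (rule ordLeq_transitive[OF assms])
  then show thesis
    using that unfolding card_of_ordLeq[symmetric] by blast
qed

end

lemma aleph1_strongly_cwH_labelled_discrete_family:
  assumes "aleph1_strongly_cwH X" "closed_discrete_in X D" "\<not> countable D"
  obtains D' U and m :: "'a \<Rightarrow> real" where "\<not> countable D'"
    "\<forall>x \<in> D'. openin X (U x) \<and> x \<in> U x" "discrete_family_in X D' U"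
    "inj_on m D'" "m ` D' \<subseteq> {0<..<1}"
proof -
  obtain D' where D': "D' \<subseteq> D" "\<not> countable D'" "(card_of D', cardSuc natLeq) \<in> ordLeq"
    by (rule uncountable_subset_card_le_cardSuc_natLeq[OF assms(3)])
  obtain U where "\<forall>x \<in> D'. openin X (U x) \<and> x \<in> U x" "discrete_family_in X D' U"
    by (rule aleph1_strongly_cwH_expansion[OF assms(1) closed_discrete_in_subset[OF assms(2) D'(1)] D'(3)])
  moreover obtain m :: "'a \<Rightarrow> real" where "inj_on m D'" "m ` D' \<subseteq> {0<..<1}"
    by (rule card_le_cardSuc_natLeq_embeds_unit_interval[OF D'(3)])
  ultimately show thesis
    using that D'(2) by blast
qed

section \<open>Bump functions in charts\<close>

definition l1_dist :: "nat \<Rightarrow> (nat \<Rightarrow> real) \<Rightarrow> (nat \<Rightarrow> real) \<Rightarrow> real" where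
  "l1_dist n x y = (\<Sum>i<n. \<bar>x i - y i\<bar>)"

lemma Euclidean_space_eq_top_of_set:
  "Euclidean_space n = top_of_set (topspace (Euclidean_space n))"
  by (simp add: Euclidean_space_def euclidean_product_topology)

lemma continuous_on_l1_dist: "continuous_on A (l1_dist n c)"
  unfolding l1_dist_def
  by (intro continuous_intros continuous_on_product_then_coordinatewise continuous_on_id)

lemma coordinate_le_l1_dist: "i < n \<Longrightarrow> \<bar>x i - y i\<bar> \<le> l1_dist n x y"
  unfolding l1_dist_def by (intro member_le_sum) auto

lemma Euclidean_space_l1_cball_subset:
  assumes W: "openin (Euclidean_space n) W" "c \<in> W"
  obtains \<delta> where "0 < \<delta>"
    "\<And>y. \<lbrakk>y \<in> topspace (Euclidean_space n); l1_dist n c y \<le> \<delta>\<rbrakk> \<Longrightarrow> y \<in> W"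
proof -
  let ?S = "topspace (Euclidean_space n)"
  obtain T where T: "open T" "W = ?S \<inter> T"
    using W(1) by (metis Euclidean_space_eq_top_of_set openin_open)
  \<comment> \<open>The topology of \<open>nat \<Rightarrow> real\<close> is that of the metric from \<open>Function_Metric\<close>,
    whose distance the coordinates up to \<open>N\<close> control up to an error \<open>(1/2)^N\<close>.\<close>
  obtain \<epsilon> where \<epsilon>: "0 < \<epsilon>" "ball c \<epsilon> \<subseteq> T"
    using T W(2) open_contains_ball by blast
  obtain N where N: "(1/2) ^ N < \<epsilon> / 2"
    using real_arch_pow_inv[of "\<epsilon> / 2" "1/2"] \<epsilon>(1) by auto
  show thesis
  proof
    show "0 < \<epsilon> / 4"
      using \<epsilon>(1) by simp
    fix y assume y: "y \<in> ?S" "l1_dist n c y \<le> \<epsilon> / 4"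
    have c: "c \<in> ?S"
      using W openin_subset by blast
    have "\<bar>c j - y j\<bar> \<le> l1_dist n c y" for j
    proof (cases "j < n")
      case False
      then show ?thesis
        using c y(1) by (simp add: topspace_Euclidean_space l1_dist_def sum_nonneg)
    qed (rule coordinate_le_l1_dist)
    then have "Max {dist (c (from_nat k)) (y (from_nat k)) |k. k \<le> N} \<le> l1_dist n c y"
      by (subst Max_le_iff) (auto simp: dist_real_def)
    then have "dist c y < \<epsilon>"
      using dist_fun_le_dist_first_terms[of c y N] N y(2) by linarith
    then show "y \<in> W"
      using \<epsilon>(2) T(2) y(1) by auto
  qed
qed

lemma compactin_Euclidean_space_l1_cball:
  "compactin (Euclidean_space n) {y \<in> topspace (Euclidean_space n). l1_dist n c y \<le> \<delta>}"
proof -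
  let ?S = "topspace (Euclidean_space n)"
  let ?K = "{y \<in> ?S. l1_dist n c y \<le> \<delta>}"
  define P where "P = PiE UNIV (\<lambda>i. if i < n then cball (c i) \<delta> else {0::real})"
  have "compactin (product_topology (\<lambda>i. euclideanreal) UNIV) P"
    unfolding P_def compactin_PiE by auto
  then have "compact P"
    by (simp add: euclidean_product_topology)
  have "?K \<subseteq> P"
  proof
    fix y assume y: "y \<in> ?K"
    have "y i \<in> (if i < n then cball (c i) \<delta> else {0})" for i
    proof (cases "i < n")
      case True
      then show ?thesis
        using coordinate_le_l1_dist[OF True, of c y] y by (simp add: dist_real_def)
    next
      case False
      then show ?thesis
        using y by (simp add: topspace_Euclidean_space)
    qed
    then show "y \<in> P"
      by (simp add: P_def PiE_iff)
  qed
  have "closed {y. l1_dist n c y \<le> \<delta>}"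
    by (rule closed_Collect_le[OF continuous_on_l1_dist continuous_on_const])
  moreover have "closed ?S"
    by (rule closedin_Euclidean_imp_closed[OF closedin_topspace])
  ultimately have "closed ?K"
    by (simp add: Collect_conj_eq closed_Int)
  then have "compact (P \<inter> ?K)"
    by (rule compact_Int_closed[OF \<open>compact P\<close>])
  then have "compact ?K"
    using \<open>?K \<subseteq> P\<close> by (simp add: Int_absorb1)
  then show ?thesis
    by (subst Euclidean_space_eq_top_of_set) (simp add: compactin_subtopology)
qed

lemma l1_dist_shift_first_coordinate:
  assumes "0 < n"
  shows "l1_dist n c (\<lambda>i. if i = 0 then c 0 + t else c i) = \<bar>t\<bar>"
proof -
  have "l1_dist n c (\<lambda>i. if i = 0 then c 0 + t else c i) = (\<Sum>i<n. if i = 0 then \<bar>t\<bar> else 0)"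
    unfolding l1_dist_def by (intro sum.cong) auto
  then show ?thesis
    using assms by simp
qed

lemma Euclidean_space_bump_path:
  assumes W: "openin (Euclidean_space n) W" "c \<in> W" and "0 < n"
  shows "\<exists>\<sigma> K v. continuous_map (Euclidean_space n) euclideanreal \<sigma> \<and>
           compactin (Euclidean_space n) K \<and> K \<subseteq> W \<and>
           (\<forall>z \<in> topspace (Euclidean_space n). \<sigma> z < 1 \<longrightarrow> z \<in> K) \<and>
           continuous_map (top_of_set {0..1}) (Euclidean_space n) v \<and> (\<forall>t \<in> {0..1}. \<sigma> (v t) = t)"
proof -
  let ?S = "topspace (Euclidean_space n)"
  obtain \<delta> where \<delta>: "0 < \<delta>" "\<And>y. \<lbrakk>y \<in> ?S; l1_dist n c y \<le> \<delta>\<rbrakk> \<Longrightarrow> y \<in> W"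
    using Euclidean_space_l1_cball_subset[OF W] by blast
  define \<sigma> where "\<sigma> y = l1_dist n c y / \<delta>" for y
  define K where "K = {y \<in> ?S. l1_dist n c y \<le> \<delta>}"
  define v where "v t = (\<lambda>i. if i = 0 then c 0 + t * \<delta> else c i)" for t
  have "c \<in> ?S"
    using W openin_subset by blast
  then have vS: "v t \<in> ?S" for t
    using \<open>0 < n\<close> by (simp add: topspace_Euclidean_space v_def)
  have "continuous_on {0..1} v"
    unfolding v_def
  proof (intro continuous_on_coordinatewise_then_product)
    show "continuous_on {0..1} (\<lambda>t. if i = 0 then c 0 + t * \<delta> else c i)" for i
      by (cases "i = 0") (auto intro!: continuous_intros)
  qed
  then have "continuous_map (top_of_set {0..1}) (Euclidean_space n) v"
    using vS by (subst Euclidean_space_eq_top_of_set) (auto simp: continuous_map_in_subtopology)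
  moreover have "continuous_map (Euclidean_space n) euclideanreal \<sigma>"
    unfolding continuous_map_Euclidean_space_iff \<sigma>_def using \<delta>(1)
    by (intro continuous_on_divide continuous_on_l1_dist continuous_on_const) auto
  moreover have "compactin (Euclidean_space n) K"
    unfolding K_def by (rule compactin_Euclidean_space_l1_cball)
  moreover have "K \<subseteq> W"
    using \<delta>(2) by (auto simp: K_def)
  moreover have "\<forall>z \<in> ?S. \<sigma> z < 1 \<longrightarrow> z \<in> K"
    using \<delta>(1) by (simp add: \<sigma>_def K_def)
  moreover have "\<forall>t \<in> {0..1}. \<sigma> (v t) = t"
  proof
    fix t :: real assume "t \<in> {0..1}"
    then show "\<sigma> (v t) = t"
      using \<delta>(1) l1_dist_shift_first_coordinate[OF \<open>0 < n\<close>, of c "t * \<delta>"]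
      by (simp add: \<sigma>_def v_def abs_mult)
  qed
  ultimately show ?thesis
    by blast
qed

lemma chart_bump_path:
  assumes X: "Hausdorff_space X" and V: "openin X V"
    and hk: "homeomorphic_maps (subtopology X V) (Euclidean_space n) h k" and "0 < n"
    and U: "openin X U" "x \<in> U" "x \<in> V"
  shows "\<exists>\<rho> p. continuous_map X euclideanreal \<rho> \<and> (\<forall>y \<in> topspace X. \<rho> y < 1 \<longrightarrow> y \<in> U) \<and>
           continuous_map (top_of_set {0..1}) X p \<and> (\<forall>t \<in> {0..1}. \<rho> (p t) = t)"
proof -
  let ?E = "Euclidean_space n"
  have h: "continuous_map (subtopology X V) ?E h" and k: "continuous_map ?E (subtopology X V) k"
    and kh: "\<And>y. \<lbrakk>y \<in> topspace X; y \<in> V\<rbrakk> \<Longrightarrow> k (h y) = y"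
    and hk': "\<And>z. z \<in> topspace ?E \<Longrightarrow> h (k z) = z"
    using hk by (auto simp: homeomorphic_maps_def)
  have kV: "k z \<in> topspace X \<and> k z \<in> V" if "z \<in> topspace ?E" for z
    using continuous_map_image_subset_topspace[OF k] that by auto
  have hE: "h y \<in> topspace ?E" if "y \<in> topspace X" "y \<in> V" for y
    using continuous_map_image_subset_topspace[OF h] that by auto
  define W where "W = {z \<in> topspace ?E. k z \<in> V \<inter> U}"
  have "openin ?E W"
    unfolding W_def
    by (rule openin_continuous_map_preimage[OF k]) (simp add: U(1) openin_subtopology_Int2)
  have "x \<in> topspace X"
    using U openin_subset by blast
  then have "h x \<in> W"
    using hE kh U by (simp add: W_def)
  obtain \<sigma> K v where \<sigma>: "continuous_map ?E euclideanreal \<sigma>"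
    and K: "compactin ?E K" "K \<subseteq> W" "\<forall>z \<in> topspace ?E. \<sigma> z < 1 \<longrightarrow> z \<in> K"
    and v: "continuous_map (top_of_set {0..1}) ?E v" "\<forall>t \<in> {0..1}. \<sigma> (v t) = t"
    using Euclidean_space_bump_path[OF \<open>openin ?E W\<close> \<open>h x \<in> W\<close> \<open>0 < n\<close>] by blast
  \<comment> \<open>\<open>\<rho>\<close> is 1 off the compact set \<open>k ` K\<close>, which is closed since \<open>X\<close> is Hausdorff;
    this makes \<open>\<rho>\<close> continuous also at the boundary of the chart.\<close>
  define \<rho> where "\<rho> y = (if y \<in> V then min 1 (\<sigma> (h y)) else 1)" for y
  have "compactin (subtopology X V) (k ` K)"
    by (rule image_compactin[OF K(1) k])
  then have "closedin X (k ` K)"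
    by (simp add: compactin_subtopology compactin_imp_closedin[OF X])
  have \<rho>_off: "\<rho> y = 1" if "y \<in> topspace X" "y \<notin> k ` K" for y
  proof (cases "y \<in> V")
    case True
    have "\<not> \<sigma> (h y) < 1"
    proof
      assume "\<sigma> (h y) < 1"
      then have "k (h y) \<in> k ` K"
        using K(3) hE[OF that(1) True] by blast
      then show False
        using kh that True by simp
    qed
    then show ?thesis
      using True by (simp add: \<rho>_def)
  qed (simp add: \<rho>_def)
  have "continuous_map X euclideanreal \<rho>"
  proof (rule continuous_map_locally)
    fix y assume y: "y \<in> topspace X"
    show "\<exists>T. openin X T \<and> y \<in> T \<and> continuous_map (subtopology X T) euclideanreal \<rho>"
    proof (cases "y \<in> V")
      case True
      have "continuous_map (subtopology X V) euclideanreal (\<lambda>y. min 1 (\<sigma> (h y)))"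
        using continuous_map_compose[OF h \<sigma>] by (intro continuous_intros) (simp add: o_def)
      then have "continuous_map (subtopology X V) euclideanreal \<rho>"
        by (rule continuous_map_eq) (simp add: \<rho>_def)
      then show ?thesis
        using V True by blast
    next
      case False
      have "k ` K \<subseteq> V"
        using K(1) kV compactin_subset_topspace by blast
      then have "y \<in> topspace X - k ` K"
        using y False by blast
      moreover have "continuous_map (subtopology X (topspace X - k ` K)) euclideanreal \<rho>"
        by (rule continuous_map_eq[of _ _ "\<lambda>_. 1"]) (auto simp: \<rho>_off)
      moreover have "openin X (topspace X - k ` K)"
        using \<open>closedin X (k ` K)\<close> by (simp add: closedin_def)
      ultimately show ?thesis
        by blast
    qed
  qed
  moreover have "y \<in> U" if "y \<in> topspace X" "\<rho> y < 1" for y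
  proof -
    have "y \<in> V" "\<sigma> (h y) < 1"
      using that by (auto simp: \<rho>_def split: if_splits)
    then have "h y \<in> W"
      using K(2,3) hE[OF that(1) \<open>y \<in> V\<close>] by blast
    then show "y \<in> U"
      using kh \<open>y \<in> V\<close> that(1) by (simp add: W_def)
  qed
  moreover have "continuous_map (top_of_set {0..1}) X (k \<circ> v)"
    using continuous_map_compose[OF v(1) k] by (rule continuous_map_into_fulltopology)
  moreover have "\<rho> ((k \<circ> v) t) = t" if "t \<in> {0..1}" for t
  proof -
    have "v t \<in> topspace ?E"
      using continuous_map_image_subset_topspace[OF v(1)] that by auto
    then show ?thesis
      using that v(2) hk' kV by (simp add: \<rho>_def)
  qed
  ultimately show ?thesis
    by blast
qed

lemma manifold_positive_dimension:
  assumes "is_manifold X" "a \<in> topspace X" "b \<in> topspace X" "a \<noteq> b"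
  obtains n where "0 < n"
    "\<forall>x \<in> topspace X. \<exists>V. openin X V \<and> x \<in> V \<and> subtopology X V homeomorphic_space Euclidean_space n"
proof -
  obtain n where charts:
      "\<forall>x \<in> topspace X. \<exists>V. openin X V \<and> x \<in> V \<and> subtopology X V homeomorphic_space Euclidean_space n"
    using assms(1) unfolding is_manifold_def by blast
  have "n \<noteq> 0"
  proof
    assume "n = 0"
    obtain V where V: "openin X V" "a \<in> V" "subtopology X V homeomorphic_space Euclidean_space 0"
      using charts assms(2) \<open>n = 0\<close> by blast
    then obtain f g where "homeomorphic_maps (subtopology X V) (Euclidean_space 0) f g"
      unfolding homeomorphic_space_def by blast
    then have f: "continuous_map (subtopology X V) (Euclidean_space 0) f"
      and gf: "\<forall>y \<in> topspace X \<inter> V. g (f y) = y"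
      by (auto simp: homeomorphic_maps_def)
    have "y = a" if "y \<in> V" for y
    proof -
      have "V \<subseteq> topspace X"
        using V(1) openin_subset by blast
      then have "f z = (\<lambda>_. 0)" if "z \<in> V" for z
        using continuous_map_image_subset_topspace[OF f] that
        by (auto simp: topspace_Euclidean_space fun_eq_iff)
      then show "y = a"
        using gf \<open>V \<subseteq> topspace X\<close> \<open>y \<in> V\<close> V(2) by (metis IntI subsetD)
    qed
    then have "V = {a}"
      using V(2) by blast
    moreover have "t1_space X" "connected_space X"
      using assms(1) by (auto simp: is_manifold_def Hausdorff_imp_t1_space)
    ultimately have "openin X {a}" "closedin X {a}"
      using V(1) closedin_t1_singleton[OF _ assms(2)] by auto
    then have "{a} = topspace X"
      using connected_space_clopen_in[THEN iffD1, OF \<open>connected_space X\<close>] by blast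
    then show False
      using assms(3,4) by auto
  qed
  then show thesis
    using charts by (intro that) auto
qed

section \<open>Zigzag functions\<close>

text \<open>
  On \<open>[0,\<infinity>)\<close>, \<open>zigzag m\<close> is the piecewise linear function through \<open>(0, 2)\<close>,
  \<open>((2 - m)/4, m)\<close>, \<open>((3 - m)/4, m + 1)\<close> and \<open>(1, 0)\<close>, and 0 beyond 1. For \<open>0 < m < 1\<close> it
  is positive on \<open>[0,1)\<close>, takes the value 2 only at 0, and its turning values \<open>m\<close> and
  \<open>m + 1\<close> determine \<open>m\<close>.
\<close>

definition zigzag :: "real \<Rightarrow> real \<Rightarrow> real" where
  "zigzag m s = max 0 (min (4 - 4 * s) (max (2 - 4 * s) (4 * s - 2 + 2 * m)))"

lemma continuous_on_zigzag: "continuous_on A (zigzag m)"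
  unfolding zigzag_def by (intro continuous_intros)

lemma zigzag_eq_two_iff: "m < 1 \<Longrightarrow> zigzag m s = 2 \<longleftrightarrow> s = 0"
  unfolding zigzag_def by (auto simp: max_def min_def field_simps)

lemma zigzag_valley: "0 \<le> m \<Longrightarrow> zigzag m ((2 - m) / 4) = m"
  unfolding zigzag_def by (auto simp: max_def min_def field_simps)

lemma zigzag_peak: "0 \<le> m \<Longrightarrow> zigzag m ((3 - m) / 4) = m + 1"
  unfolding zigzag_def by (auto simp: max_def min_def field_simps)

lemma zigzag_eq_zero: "1 \<le> s \<Longrightarrow> zigzag m s = 0"
  unfolding zigzag_def by (auto simp: max_def min_def field_simps)

lemma zigzag_pos: "0 < m \<Longrightarrow> s < 1 \<Longrightarrow> 0 < zigzag m s"
  unfolding zigzag_def by (auto simp: max_def min_def field_simps)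

lemma zigzag_le_last_segment: "zigzag m s \<le> max 0 (4 - 4 * s)"
  unfolding zigzag_def by (auto simp: max_def min_def field_simps)

lemma zigzag_less_imp: "zigzag m s < m \<Longrightarrow> 1 - m/4 < s"
  unfolding zigzag_def by (auto simp: max_def min_def field_simps split: if_splits)

lemma zigzag_greater_imp: "0 \<le> m \<Longrightarrow> m + 1 < zigzag m s \<Longrightarrow> s < (1 - m)/4"
  unfolding zigzag_def by (auto simp: max_def min_def field_simps split: if_splits)

lemma antimono_on_zigzag_descent: "antimono_on {..(2 - m)/4} (zigzag m)"
  by (intro monotone_onI) (auto simp: zigzag_def max_def min_def field_simps)

lemma antimono_on_zigzag_final: "antimono_on {(3 - m)/4..} (zigzag m)"
  by (intro monotone_onI) (auto simp: zigzag_def max_def min_def field_simps)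

lemma zigzag_no_upcrossing:
  assumes "0 \<le> b" "u \<le> v" and g: "continuous_on {u..v} g"
    and "g u \<le> (2 - b)/4" "(3 - b)/4 \<le> g v"
    and mono: "antimono_on {u..v} (zigzag a)"
    and eq: "\<And>t. t \<in> {u..v} \<Longrightarrow> zigzag b (g t) = zigzag a t"
  shows False
proof -
  obtain t1 where t1: "u \<le> t1" "t1 \<le> v" "g t1 = (2 - b)/4"
    using IVT'[of g u "(2 - b)/4" v] assms by auto
  obtain t2 where t2: "t1 \<le> t2" "t2 \<le> v" "g t2 = (3 - b)/4"
    using IVT'[of g t1 "(3 - b)/4" v] assms t1 continuous_on_subset[OF g] by auto
  have "zigzag a t2 \<le> zigzag a t1"
    using monotone_onD[OF mono, of t1 t2] t1 t2 by auto
  then show False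
    using eq[of t1] eq[of t2] t1 t2 zigzag_valley zigzag_peak \<open>0 \<le> b\<close> by simp
qed

text \<open>
  If \<open>zigzag b \<circ> g = zigzag a\<close> with \<open>g 0 = 0\<close>, the path \<open>g\<close> would have to climb from the
  valley to the peak of \<open>zigzag b\<close> while \<open>zigzag a\<close> is descending: before the valley of
  \<open>zigzag a\<close> if \<open>a < b\<close>, after its peak if \<open>b < a\<close>.
\<close>

lemma zigzag_rigid:
  assumes ab: "0 < a" "a < 1" "0 < b" "b < 1"
    and g: "continuous_on {0..<1} g"
    and eq: "\<And>t. 0 \<le> t \<Longrightarrow> t < 1 \<Longrightarrow> zigzag b (g t) = zigzag a t"
  shows "a = b"
proof -
  have gc: "continuous_on {u..v} g" if "0 \<le> u" "v < 1" for u v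
    using that by (intro continuous_on_subset[OF g]) auto
  have "g 0 = 0"
    using eq[of 0] zigzag_eq_two_iff[of a 0] zigzag_eq_two_iff[of b "g 0"] ab by simp
  moreover have False if "a < b"
  proof -
    let ?t = "(2 - a)/4"
    have "zigzag b (g ?t) < b"
      using eq[of ?t] zigzag_valley ab that by simp
    then have "(3 - b)/4 \<le> g ?t"
      using zigzag_less_imp by fastforce
    then show False
      using zigzag_no_upcrossing[OF _ _ gc, of b 0 ?t a] \<open>g 0 = 0\<close> ab eq
        monotone_on_subset[OF antimono_on_zigzag_descent, of "{0..?t}" a] by auto
  qed
  moreover have False if "b < a"
  proof -
    let ?u = "(3 - a)/4" and ?v = "1 - b/8"
    have "b + 1 < zigzag b (g ?u)"
      using eq[of ?u] zigzag_peak ab that by simp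
    then have "g ?u \<le> (2 - b)/4"
      using zigzag_greater_imp[of b] ab by fastforce
    moreover have "zigzag b (g ?v) < b"
      using eq[of ?v] zigzag_le_last_segment[of a ?v] ab by simp
    then have "(3 - b)/4 \<le> g ?v"
      using zigzag_less_imp by fastforce
    ultimately show False
      using zigzag_no_upcrossing[OF _ _ gc, of b ?u ?v a] ab eq
        monotone_on_subset[OF antimono_on_zigzag_final, of "{?u..?v}" a] by auto
  qed
  ultimately show "a = b"
    by fastforce
qed

section \<open>Zigzags glued along a discrete family of bumps\<close>

locale zigzag_family =
  fixes X :: "'a topology" and I :: "'i set" and U :: "'i \<Rightarrow> 'a set"
    and \<rho> :: "'i \<Rightarrow> 'a \<Rightarrow> real" and m :: "'i \<Rightarrow> real"
  assumes discrete: "discrete_family_in X I U"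
    and continuous_bump: "\<And>i. i \<in> I \<Longrightarrow> continuous_map X euclideanreal (\<rho> i)"
    and bump_support: "\<And>i y. \<lbrakk>i \<in> I; y \<in> topspace X; \<rho> i y < 1\<rbrakk> \<Longrightarrow> y \<in> U i"
    and inj_m: "inj_on m I" and m_range: "m ` I \<subseteq> {0<..<1}"
begin

definition glued_zigzag :: "'a \<Rightarrow> real" where
  "glued_zigzag y =
     (if \<exists>i \<in> I. \<rho> i y < 1 then (let i = SOME i. i \<in> I \<and> \<rho> i y < 1 in zigzag (m i) (\<rho> i y)) else 0)"

lemma bump_unique:
  "\<lbrakk>i \<in> I; j \<in> I; y \<in> topspace X; \<rho> i y < 1; \<rho> j y < 1\<rbrakk> \<Longrightarrow> i = j"
  using discrete_family_in_disjoint[OF discrete] bump_support by blast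

lemma glued_zigzag_eq:
  assumes "i \<in> I" "y \<in> topspace X" "\<rho> i y < 1"
  shows "glued_zigzag y = zigzag (m i) (\<rho> i y)"
proof -
  have ex: "\<exists>j. j \<in> I \<and> \<rho> j y < 1"
    using assms by blast
  define j where "j = (SOME j. j \<in> I \<and> \<rho> j y < 1)"
  have j: "j \<in> I" "\<rho> j y < 1"
    using someI_ex[OF ex] unfolding j_def by auto
  have "glued_zigzag y = zigzag (m j) (\<rho> j y)"
    using ex unfolding glued_zigzag_def j_def Let_def by auto
  moreover have "j = i"
    by (rule bump_unique[OF j(1) assms(1,2) j(2) assms(3)])
  ultimately show ?thesis
    by simp
qed

lemma glued_zigzag_eq_0: "(\<And>i. i \<in> I \<Longrightarrow> 1 \<le> \<rho> i y) \<Longrightarrow> glued_zigzag y = 0"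
  by (force simp: glued_zigzag_def)

lemma glued_zigzag_eq_0_off_bumps:
  assumes "y \<in> topspace X" "\<And>i. i \<in> I \<Longrightarrow> y \<notin> U i"
  shows "glued_zigzag y = 0"
proof (rule glued_zigzag_eq_0)
  show "1 \<le> \<rho> i y" if "i \<in> I" for i
    using bump_support[OF that assms(1)] assms(2)[OF that] by fastforce
qed

lemma glued_zigzag_eq_near_bump:
  assumes V: "\<forall>i \<in> I. \<forall>j \<in> I. V \<inter> U i \<noteq> {} \<and> V \<inter> U j \<noteq> {} \<longrightarrow> i = j"
    and i: "i \<in> I" "V \<inter> U i \<noteq> {}" and y: "y \<in> topspace X" "y \<in> V"
  shows "glued_zigzag y = zigzag (m i) (\<rho> i y)"
proof (cases "\<rho> i y < 1")
  case True
  then show ?thesis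
    using glued_zigzag_eq i(1) y(1) by blast
next
  case False
  have "1 \<le> \<rho> j y" if "j \<in> I" for j
  proof (rule ccontr)
    assume "\<not> 1 \<le> \<rho> j y"
    then have "V \<inter> U j \<noteq> {}"
      using bump_support[OF that y(1)] y(2) by force
    then have "j = i"
      using V[rule_format, OF that i(1)] i(2) by blast
    then show False
      using False \<open>\<not> 1 \<le> \<rho> j y\<close> by simp
  qed
  then show ?thesis
    using glued_zigzag_eq_0 zigzag_eq_zero False by simp
qed

lemma continuous_map_glued_zigzag: "continuous_map X euclideanreal glued_zigzag"
proof (rule continuous_map_locally)
  fix y assume "y \<in> topspace X"
  then obtain V where V: "openin X V" "y \<in> V"
    "\<forall>i \<in> I. \<forall>j \<in> I. V \<inter> U i \<noteq> {} \<and> V \<inter> U j \<noteq> {} \<longrightarrow> i = j"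
    by (rule discrete_family_inE[OF discrete])
  have "\<exists>g. continuous_map X euclideanreal g \<and> (\<forall>z \<in> topspace X \<inter> V. glued_zigzag z = g z)"
  proof (cases "\<exists>i \<in> I. V \<inter> U i \<noteq> {}")
    case True
    then obtain i where i: "i \<in> I" "V \<inter> U i \<noteq> {}"
      by blast
    have "continuous_map euclideanreal euclideanreal (zigzag (m i))"
      unfolding continuous_map_iff_continuous2 by (rule continuous_on_zigzag)
    then have "continuous_map X euclideanreal (zigzag (m i) \<circ> \<rho> i)"
      by (rule continuous_map_compose[OF continuous_bump[OF i(1)]])
    moreover have "\<forall>z \<in> topspace X \<inter> V. glued_zigzag z = (zigzag (m i) \<circ> \<rho> i) z"
      using glued_zigzag_eq_near_bump[OF V(3) i] by simp
    ultimately show ?thesis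
      by blast
  next
    case False
    then have "\<forall>z \<in> topspace X \<inter> V. glued_zigzag z = 0"
      using glued_zigzag_eq_0_off_bumps by blast
    then show ?thesis
      by (intro exI[of _ "\<lambda>_. 0"]) simp
  qed
  then obtain g where "continuous_map X euclideanreal g" "\<forall>z \<in> topspace X \<inter> V. glued_zigzag z = g z"
    by blast
  then have "continuous_map (subtopology X V) euclideanreal glued_zigzag"
    by (intro continuous_map_eq[OF continuous_map_from_subtopology]) auto
  then show "\<exists>T. openin X T \<and> y \<in> T \<and> continuous_map (subtopology X T) euclideanreal glued_zigzag"
    using V(1,2) by blast
qed

lemma glued_zigzag_nonzero_imp: "glued_zigzag y \<noteq> 0 \<Longrightarrow> \<exists>i \<in> I. \<rho> i y < 1"
  using glued_zigzag_eq_0 by (meson not_le)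

lemma path_in_single_bump:
  fixes q :: "real \<Rightarrow> 'a"
  assumes q: "continuous_map (top_of_set {0..1}) X q"
    and nonzero: "\<And>t. t \<in> {0..<1} \<Longrightarrow> glued_zigzag (q t) \<noteq> 0"
  obtains \<beta> where "\<beta> \<in> I" "\<And>t. t \<in> {0..<1} \<Longrightarrow> \<rho> \<beta> (q t) < 1"
proof -
  define W where "W i = {y \<in> topspace X. \<rho> i y < 1}" for i
  have qX: "q t \<in> topspace X" if "t \<in> {0..1}" for t
    using continuous_map_image_subset_topspace[OF q] that by auto
  have cover: "q ` {0..<1} \<subseteq> (\<Union>i \<in> I. W i)"
  proof
    fix y assume "y \<in> q ` {0..<1}"
    then obtain t where t: "t \<in> {0..<1}" "y = q t"
      by blast
    then obtain i where "i \<in> I" "\<rho> i y < 1"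
      using glued_zigzag_nonzero_imp nonzero by blast
    moreover have "t \<in> {0..1}"
      using t(1) by simp
    then have "y \<in> topspace X"
      using qX t(2) by blast
    ultimately show "y \<in> (\<Union>i \<in> I. W i)"
      by (auto simp: W_def)
  qed
  moreover have "q 0 \<in> q ` {0..<1}"
    by simp
  ultimately obtain \<beta> where \<beta>: "\<beta> \<in> I" "q 0 \<in> W \<beta>"
    by blast
  have "connectedin (top_of_set {0..1}) {0..<1::real}"
    by (simp add: connectedin_subtopology atLeastLessThan_subseteq_atLeastAtMost_iff)
  then have "connectedin X (q ` {0..<1})"
    by (rule connectedin_continuous_map_image[OF q])
  moreover have "openin X (W i)" if "i \<in> I" for i
    using openin_continuous_map_preimage[OF continuous_bump[OF that], of "{..<1}"]
    by (simp add: W_def)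
  moreover have "disjnt (W i) (W j)" if "i \<in> I" "j \<in> I" "i \<noteq> j" for i j
    using bump_unique that by (auto simp: W_def disjnt_def)
  ultimately have "q ` {0..<1} \<subseteq> W \<beta>"
    using connectedin_subset_disjoint_open_family[OF _ cover _ _ \<beta>(1) _ \<beta>(2)] by simp
  then have "\<And>t. t \<in> {0..<1} \<Longrightarrow> \<rho> \<beta> (q t) < 1"
    by (auto simp: W_def image_subset_iff)
  then show thesis
    by (rule that[OF \<beta>(1)])
qed

lemma no_zigzag_preserving_map_into_avoided_set:
  assumes r: "continuous_map X (subtopology X Z) r"
    and fixes_outside: "\<And>y. y \<in> topspace X - Z \<Longrightarrow> glued_zigzag (r y) = glued_zigzag y"
    and \<alpha>: "\<alpha> \<in> I" "U \<alpha> \<inter> Z = {}"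
    and p: "continuous_map (top_of_set {0..1}) X p" "\<forall>t \<in> {0..1}. \<rho> \<alpha> (p t) = t"
  shows False
proof -
  define q where "q = r \<circ> p"
  have q: "continuous_map (top_of_set {0..1}) X q"
    unfolding q_def using continuous_map_compose[OF p(1) r] continuous_map_into_fulltopology by blast
  have qZ: "q t \<in> Z" if "t \<in> {0..1}" for t
    using continuous_map_image_subset_topspace[OF continuous_map_compose[OF p(1) r]] that
    by (auto simp: q_def)
  have pX: "p t \<in> topspace X" if "t \<in> {0..1}" for t
    using continuous_map_image_subset_topspace[OF p(1)] that by auto
  have qX: "q t \<in> topspace X" if "t \<in> {0..1}" for t
    using continuous_map_image_subset_topspace[OF q] that by auto
  have m: "0 < m i" "m i < 1" if "i \<in> I" for i
    using m_range that by auto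
  have fq: "glued_zigzag (q t) = zigzag (m \<alpha>) t" if "t \<in> {0..<1}" for t
  proof -
    have "p t \<in> U \<alpha>"
      using bump_support[OF \<alpha>(1) pX] p(2) that by auto
    then have "p t \<notin> Z"
      using \<alpha>(2) by blast
    then show ?thesis
      using fixes_outside pX glued_zigzag_eq[OF \<alpha>(1)] p(2) that by (simp add: q_def)
  qed
  obtain \<beta> where \<beta>: "\<beta> \<in> I" "\<And>t. t \<in> {0..<1} \<Longrightarrow> \<rho> \<beta> (q t) < 1"
    using path_in_single_bump[OF q] fq zigzag_pos m[OF \<alpha>(1)] by (metis atLeastLessThan_iff less_irrefl)
  have "m \<alpha> = m \<beta>"
  proof (rule zigzag_rigid)
    show "continuous_on {0..<1} (\<rho> \<beta> \<circ> q)"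
      using continuous_map_compose[OF q continuous_bump[OF \<beta>(1)]]
      by (auto intro: continuous_on_subset simp: continuous_map_iff_continuous)
    show "zigzag (m \<beta>) ((\<rho> \<beta> \<circ> q) t) = zigzag (m \<alpha>) t" if "0 \<le> t" "t < 1" for t
      using that fq[of t] glued_zigzag_eq[OF \<beta>(1) qX \<beta>(2)] by simp
  qed (use m \<alpha>(1) \<beta>(1) in auto)
  then have "\<alpha> = \<beta>"
    using inj_m \<alpha>(1) \<beta>(1) by (auto dest: inj_onD)
  moreover have "q 0 \<in> U \<beta>"
    using bump_support[OF \<beta>(1) qX \<beta>(2), of 0] by simp
  ultimately show False
    using qZ[of 0] \<alpha>(2) by auto
qed

lemma no_zigzag_preserving_map_into_Lindelof:
  assumes "\<not> countable I"
    and p: "\<forall>i \<in> I. continuous_map (top_of_set {0..1}) X (p i) \<and> (\<forall>t \<in> {0..1}. \<rho> i (p i t) = t)"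
    and Z: "Z \<subseteq> topspace X" "Lindelof_space (subtopology X Z)"
    and r: "continuous_map X (subtopology X Z) r"
    and fixes_outside: "\<forall>y \<in> topspace X - Z. glued_zigzag (r y) = glued_zigzag y"
  shows False
proof -
  have "\<not> I \<subseteq> {i \<in> I. U i \<inter> Z \<noteq> {}}"
    using assms(1) countable_subset countable_discrete_family_meeting_Lindelof[OF discrete Z] by blast
  then obtain \<alpha> where "\<alpha> \<in> I" "U \<alpha> \<inter> Z = {}"
    by blast
  then show False
    using no_zigzag_preserving_map_into_avoided_set[OF r _ \<open>\<alpha> \<in> I\<close> \<open>U \<alpha> \<inter> Z = {}\<close>] fixes_outside p
    by blast
qed

end

lemma manifold_admits_zigzag_family:
  assumes X: "is_manifold X" and U: "discrete_family_in X D U" "\<forall>x \<in> D. openin X (U x) \<and> x \<in> U x"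
    and m: "inj_on m D" "m ` D \<subseteq> {0<..<1}"
    and D: "\<exists>a \<in> D. \<exists>b \<in> D. a \<noteq> b"
  shows "\<exists>\<rho> p. zigzag_family X D U \<rho> m \<and>
           (\<forall>x \<in> D. continuous_map (top_of_set {0..1}) X (p x) \<and> (\<forall>t \<in> {0..1}. \<rho> x (p x t) = t))"
proof -
  have DX: "D \<subseteq> topspace X"
    using U(2) openin_subset by blast
  then obtain a b where "a \<in> topspace X" "b \<in> topspace X" "a \<noteq> b"
    using D by blast
  then obtain n where "0 < n" and charts:
    "\<forall>x \<in> topspace X. \<exists>V. openin X V \<and> x \<in> V \<and> subtopology X V homeomorphic_space Euclidean_space n"
    by (rule manifold_positive_dimension[OF X])
  have H: "Hausdorff_space X"
    using X by (simp add: is_manifold_def)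
  have "\<exists>\<rho> p. continuous_map X euclideanreal \<rho> \<and> (\<forall>y \<in> topspace X. \<rho> y < 1 \<longrightarrow> y \<in> U x) \<and>
          continuous_map (top_of_set {0..1}) X p \<and> (\<forall>t \<in> {0..1}. \<rho> (p t) = t)" if "x \<in> D" for x
  proof -
    have "x \<in> topspace X"
      using DX \<open>x \<in> D\<close> by blast
    then obtain V where V: "openin X V" "x \<in> V" "subtopology X V homeomorphic_space Euclidean_space n"
      using charts by blast
    then obtain h k where "homeomorphic_maps (subtopology X V) (Euclidean_space n) h k"
      unfolding homeomorphic_space_def by blast
    moreover have "openin X (U x)" "x \<in> U x"
      using U(2) \<open>x \<in> D\<close> by auto
    ultimately show ?thesis
      using chart_bump_path[OF H V(1) _ \<open>0 < n\<close> _ _ V(2)] by blast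
  qed
  then have "\<forall>x \<in> D. \<exists>\<rho> p. continuous_map X euclideanreal \<rho> \<and> (\<forall>y \<in> topspace X. \<rho> y < 1 \<longrightarrow> y \<in> U x) \<and>
          continuous_map (top_of_set {0..1}) X p \<and> (\<forall>t \<in> {0..1}. \<rho> (p t) = t)"
    by blast
  then obtain \<rho> where "\<forall>x \<in> D. \<exists>p. continuous_map X euclideanreal (\<rho> x) \<and> (\<forall>y \<in> topspace X. \<rho> x y < 1 \<longrightarrow> y \<in> U x) \<and>
          continuous_map (top_of_set {0..1}) X p \<and> (\<forall>t \<in> {0..1}. \<rho> x (p t) = t)"
    by (rule bchoice[THEN exE])
  then obtain p where bumps: "\<forall>x \<in> D. continuous_map X euclideanreal (\<rho> x) \<and> (\<forall>y \<in> topspace X. \<rho> x y < 1 \<longrightarrow> y \<in> U x) \<and>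
          continuous_map (top_of_set {0..1}) X (p x) \<and> (\<forall>t \<in> {0..1}. \<rho> x (p x t) = t)"
    by (rule bchoice[THEN exE])
  have "zigzag_family X D U \<rho> m"
    using U(1) m bumps by unfold_locales auto
  then show ?thesis
    using bumps by blast
qed

theorem theorem8p3:
  fixes M :: "'a topology"
  assumes "is_manifold M"
    and "aleph1_strongly_cwH M"
    and "wS M euclideanreal"
  shows "omega1_compact M"
  unfolding omega1_compact_def
proof (intro allI impI)
  fix D assume D: "closed_discrete_in M D"
  show "countable D"
  proof (rule ccontr)
    assume "\<not> countable D"
    then have "\<not> Lindelof_space M"
      using countable_closed_discrete_in_Lindelof[OF _ D] by blast
    obtain D' U and m :: "'a \<Rightarrow> real" where D': "\<not> countable D'"
      and U: "\<forall>x \<in> D'. openin M (U x) \<and> x \<in> U x" "discrete_family_in M D' U"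
      and m: "inj_on m D'" "m ` D' \<subseteq> {0<..<1}"
      by (rule aleph1_strongly_cwH_labelled_discrete_family[OF assms(2) D \<open>\<not> countable D\<close>])
    obtain \<rho> p where zf: "zigzag_family M D' U \<rho> m"
      and p: "\<forall>x \<in> D'. continuous_map (top_of_set {0..1}) M (p x) \<and> (\<forall>t \<in> {0..1}. \<rho> x (p x t) = t)"
      using manifold_admits_zigzag_family[OF assms(1) U(2,1) m uncountable_imp_two_points[OF D']]
      by blast
    interpret zigzag_family M D' U \<rho> m
      by (rule zf)
    show False
      using assms(3) \<open>\<not> Lindelof_space M\<close> continuous_map_glued_zigzag
        no_zigzag_preserving_map_into_Lindelof[OF D' p]
      unfolding wS_def by blast
  qed
qed

end
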